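(* Let $\mathscr T=(V,\mathcal E)$ be the directed Cartesian product of rooted directed trees $\mathscr T_1,\dots,\mathscr T_d$, let $S_{\boldsymbol\lambda}=(S_1,\dots,S_d)$ be a commuting multishift on $\mathscr T$ and let $E=\bigcap_j\ker S_j^*$. Then $$\bigvee_{j=1}^d\bigoplus_{v\in D_j}\Big(l^2(\mathsf{Chi}_j(v))\ominus[\Gamma^{(j)}_v]\Big)\oplus[e_{\mathsf{root}}]\ \subseteq\ E\ \subseteq\ \bigvee\{e_v:v\in F_1\times\dots\times F_d\},$$ where $D_j=\{v\in V:v_j\in V^{(j)}_\prec,\ v_i=\mathsf{root}_i\text{ for }i\ne j\}$, $\Gamma^{(j)}_v:\mathsf{Chi}_j(v)\to\mathbb C$ is $\Gamma^{(j)}_v(u)=\lambda^{(j)}_u$, and $F_j=\mathsf{Chi}(V^{(j)}_\prec)\cup\{\mathsf{root}_j\}$.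
   Context: Directed trees: no loops or circuits, connected ignoring orientation, unique parent $\mathsf{par}(v)$ for vertices with incoming edges; rooted: unique parentless vertex $\mathsf{root}$; $\mathsf{Chi}(u)=\{v:(u,v)\in\mathcal E\}$, $\mathsf{Chi}(W)=\bigcup_{u\in W}\mathsf{Chi}(u)$; all leafless. $V^{(j)}_\prec=\{u\in V_j:\mathrm{card}\,\mathsf{Chi}(u)\ge2\}$. Directed Cartesian product of rooted trees $\mathscr T_j=(V_j,\mathcal E_j)$: $V=V_1\times\dots\times V_d$ (countably infinite), $(v,w)\in\mathcal E$ iff for some $k$, $(v_k,w_k)\in\mathcal E_k$ and $w_j=v_j$ ($j\ne k$); $\mathsf{root}=(\mathsf{root}_j)$. $\mathsf{Chi}_j(v)=\{w:w_j\in\mathsf{Chi}(v_j),w_k=v_k\ (k\ne j)\}$. Multishift: positive weights, $S_je_v=\sum_{w\in\mathsf{Chi}_j(v)}\lambda^{(j)}_we_w$, each $S_j$ bounded on $l^2(V)$. $l^2(W)$ for $W\subseteq V$ is viewed as a subspace of $l^2(V)$; $[x]$ is the span of $x$; $\bigvee$ is closed linear span. *)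

theory Defs
  imports "HOL-Analysis.Analysis"
begin

definition children :: "('a \<times> 'a) set \<Rightarrow> 'a \<Rightarrow> 'a set" where
  "children E u = {v. (u, v) \<in> E}"

definition children_set :: "('a \<times> 'a) set \<Rightarrow> 'a set \<Rightarrow> 'a set" where
  "children_set E W = (\<Union>u\<in>W. children E u)"

definition has_circuit :: "('a \<times> 'a) set \<Rightarrow> bool" where
  "has_circuit E \<longleftrightarrow> (\<exists>xs. distinct xs \<and> length xs \<ge> 2 \<and>
      (\<forall>i < length xs. (xs ! i, xs ! (Suc i mod length xs)) \<in> E))"

definition directed_tree :: "'a set \<Rightarrow> ('a \<times> 'a) set \<Rightarrow> bool" where
  "directed_tree V E \<longleftrightarrow> V \<noteq> {} \<and> E \<subseteq> V \<times> V
     \<and> (\<forall>u. (u, u) \<notin> E)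
     \<and> \<not> has_circuit E
     \<and> (\<forall>u\<in>V. \<forall>v\<in>V. (u, v) \<in> (E \<union> E\<inverse>)\<^sup>*)
     \<and> (\<forall>v\<in>V. (\<exists>u. (u, v) \<in> E) \<longrightarrow> (\<exists>!u. (u, v) \<in> E))"

definition rooted_directed_tree :: "'a set \<Rightarrow> ('a \<times> 'a) set \<Rightarrow> bool" where
  "rooted_directed_tree V E \<longleftrightarrow> directed_tree V E \<and> (\<exists>!r. r \<in> V \<and> (\<nexists>u. (u, r) \<in> E))"

definition leafless :: "'a set \<Rightarrow> ('a \<times> 'a) set \<Rightarrow> bool" where
  "leafless V E \<longleftrightarrow> (\<forall>u\<in>V. children E u \<noteq> {})"

definition tree_root :: "'a set \<Rightarrow> ('a \<times> 'a) set \<Rightarrow> 'a" where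
  "tree_root V E = (THE r. r \<in> V \<and> (\<nexists>u. (u, r) \<in> E))"

definition parent :: "('a \<times> 'a) set \<Rightarrow> 'a \<Rightarrow> 'a" where
  "parent E v = (THE u. (u, v) \<in> E)"

text \<open>V_prec: vertices with at least two children (cardinality in the sense of
  cardinal numbers, so infinitely many children count).\<close>
definition branching :: "'a set \<Rightarrow> ('a \<times> 'a) set \<Rightarrow> 'a set" where
  "branching V E = {u \<in> V. infinite (children E u) \<or> card (children E u) \<ge> 2}"

definition prod_vertices :: "nat \<Rightarrow> (nat \<Rightarrow> 'a set) \<Rightarrow> (nat \<Rightarrow> 'a) set" where
  "prod_vertices d V = PiE {..<d} V"

definition prod_root :: "nat \<Rightarrow> (nat \<Rightarrow> 'a set) \<Rightarrow> (nat \<Rightarrow> ('a \<times> 'a) set) \<Rightarrow> nat \<Rightarrow> 'a" where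
  "prod_root d V E = restrict (\<lambda>j. tree_root (V j) (E j)) {..<d}"

definition children_j :: "nat \<Rightarrow> (nat \<Rightarrow> 'a set) \<Rightarrow> (nat \<Rightarrow> ('a \<times> 'a) set) \<Rightarrow> nat
    \<Rightarrow> (nat \<Rightarrow> 'a) \<Rightarrow> (nat \<Rightarrow> 'a) set" where
  "children_j d V E j v = {w \<in> prod_vertices d V. w j \<in> children (E j) (v j) \<and>
       (\<forall>k. k \<noteq> j \<longrightarrow> w k = v k)}"

definition l2 :: "'v set \<Rightarrow> ('v \<Rightarrow> complex) set" where
  "l2 X = {f. (\<forall>v. v \<notin> X \<longrightarrow> f v = 0) \<and> (\<lambda>v. (cmod (f v))\<^sup>2) summable_on X}"

text \<open>l^2(W) viewed as a subspace of l^2(X)\<close>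
definition l2_sub :: "'v set \<Rightarrow> 'v set \<Rightarrow> ('v \<Rightarrow> complex) set" where
  "l2_sub X W = {f \<in> l2 X. \<forall>v. v \<notin> W \<longrightarrow> f v = 0}"

definition l2_inner :: "'v set \<Rightarrow> ('v \<Rightarrow> complex) \<Rightarrow> ('v \<Rightarrow> complex) \<Rightarrow> complex" where
  "l2_inner X f g = (\<Sum>\<^sub>\<infinity>v\<in>X. f v * cnj (g v))"

definition l2_norm :: "'v set \<Rightarrow> ('v \<Rightarrow> complex) \<Rightarrow> real" where
  "l2_norm X f = sqrt (\<Sum>\<^sub>\<infinity>v\<in>X. (cmod (f v))\<^sup>2)"

definition basis_vec :: "'v \<Rightarrow> 'v \<Rightarrow> complex" where
  "basis_vec v = (\<lambda>w. if w = v then 1 else 0)"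

definition cspan :: "('v \<Rightarrow> complex) set \<Rightarrow> ('v \<Rightarrow> complex) set" where
  "cspan A = {f. \<exists>S c. finite S \<and> S \<subseteq> A \<and> f = (\<lambda>v. \<Sum>a\<in>S. c a * a v)}"

definition l2_closure :: "'v set \<Rightarrow> ('v \<Rightarrow> complex) set \<Rightarrow> ('v \<Rightarrow> complex) set" where
  "l2_closure X A = {f \<in> l2 X. \<forall>\<epsilon>>0. \<exists>g\<in>A. l2_norm X (\<lambda>v. f v - g v) < \<epsilon>}"

definition closed_span :: "'v set \<Rightarrow> ('v \<Rightarrow> complex) set \<Rightarrow> ('v \<Rightarrow> complex) set" where
  "closed_span X A = l2_closure X (cspan A)"

definition line_span :: "('v \<Rightarrow> complex) \<Rightarrow> ('v \<Rightarrow> complex) set" where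
  "line_span x = {(\<lambda>v. c * x v) | c. True}"

definition ortho_diff :: "'v set \<Rightarrow> ('v \<Rightarrow> complex) set \<Rightarrow> ('v \<Rightarrow> complex) set \<Rightarrow> ('v \<Rightarrow> complex) set" where
  "ortho_diff X M N = {f \<in> M. \<forall>g\<in>N. l2_inner X f g = 0}"

text \<open>Orthogonal sum of a family of (mutually orthogonal) closed subspaces:
  the closed linear span of their union.\<close>
definition osum :: "'v set \<Rightarrow> 'i set \<Rightarrow> ('i \<Rightarrow> ('v \<Rightarrow> complex) set) \<Rightarrow> ('v \<Rightarrow> complex) set" where
  "osum X I M = closed_span X (\<Union>i\<in>I. M i)"

definition oplus2 :: "'v set \<Rightarrow> ('v \<Rightarrow> complex) set \<Rightarrow> ('v \<Rightarrow> complex) set \<Rightarrow> ('v \<Rightarrow> complex) set" where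
  "oplus2 X A B = closed_span X (A \<union> B)"

text \<open>S_j e_v = sum over w in Chi_j(v) of lambda^(j)_w e_w, i.e.
  (S_j f)(w) = lambda^(j)_w f(par_j w) if w_j is not the root of T_j, and 0 otherwise.\<close>
definition mshift :: "nat \<Rightarrow> (nat \<Rightarrow> 'a set) \<Rightarrow> (nat \<Rightarrow> ('a \<times> 'a) set)
    \<Rightarrow> (nat \<Rightarrow> (nat \<Rightarrow> 'a) \<Rightarrow> real) \<Rightarrow> nat \<Rightarrow> ((nat \<Rightarrow> 'a) \<Rightarrow> complex) \<Rightarrow> (nat \<Rightarrow> 'a) \<Rightarrow> complex" where
  "mshift d V E lam j f = (\<lambda>w. if w \<in> prod_vertices d V \<and> w j \<noteq> tree_root (V j) (E j)
       then complex_of_real (lam j w) * f (w(j := parent (E j) (w j))) else 0)"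

text \<open>ker T^* = {x. T^* x = 0} = {x. for all y, <x, T y> = 0}\<close>
definition ker_adj :: "'v set \<Rightarrow> (('v \<Rightarrow> complex) \<Rightarrow> ('v \<Rightarrow> complex)) \<Rightarrow> ('v \<Rightarrow> complex) set" where
  "ker_adj X T = {x \<in> l2 X. \<forall>y\<in>l2 X. l2_inner X x (T y) = 0}"

definition bounded_on_l2 :: "'v set \<Rightarrow> (('v \<Rightarrow> complex) \<Rightarrow> ('v \<Rightarrow> complex)) \<Rightarrow> bool" where
  "bounded_on_l2 X T \<longleftrightarrow> (\<forall>f\<in>l2 X. T f \<in> l2 X) \<and> (\<exists>C. \<forall>f\<in>l2 X. l2_norm X (T f) \<le> C * l2_norm X f)"

end

theory Submission
  imports Defs
begin

text \<open>The joint kernel E of the adjoints S_j* is a closed subspace, so for the first inclusion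
  it suffices to check generators. If f vanishes wherever the i-th coordinate is not the root,
  then f is orthogonal to the range of S_i, since S_i y vanishes where that coordinate is the
  root. This covers e_root and, for i \<noteq> j, every vector supported in Chi_j(v) with v \<in> D_j.
  On Chi_j(v) the vector S_j y equals y(v) \<Gamma>_v, so orthogonality to \<Gamma>_v is exactly what
  is needed for i = j.

  For the second inclusion, if w_j \<notin> F_j then w_j is the only child of its parent p, hence
  S_j e_w' = \<lambda>_w e_w for w' = w(j := p), and every x \<in> E satisfies \<lambda>_w x(w) = 0. So x is
  supported in F_1 \<times> \<dots> \<times> F_d, and an l2 vector is approximated by its finite truncations.\<close>

lemma two_mult_le_weighted_squares:
  fixes a b t :: real
  assumes "t > 0"
  shows "2 * a * b \<le> t * a\<^sup>2 + b\<^sup>2 / t"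
proof -
  have "0 \<le> (t * a - b)\<^sup>2 / t" using assms by simp
  also have "(t * a - b)\<^sup>2 / t = t * a\<^sup>2 + b\<^sup>2 / t - 2 * a * b"
    using assms by (simp add: power2_diff field_simps power2_eq_square)
  finally show ?thesis by simp
qed

lemma l2_zero: "(\<lambda>v. 0) \<in> l2 X"
  by (simp add: l2_def)

lemma l2_add:
  assumes "f \<in> l2 X" "g \<in> l2 X"
  shows "(\<lambda>v. f v + g v) \<in> l2 X"
proof -
  have sq: "(cmod (a + b))\<^sup>2 \<le> 2 * (cmod a)\<^sup>2 + 2 * (cmod b)\<^sup>2" for a b :: complex
  proof -
    have "(cmod (a + b))\<^sup>2 \<le> (cmod a + cmod b)\<^sup>2"
      using norm_triangle_ineq[of a b] by (simp add: power_mono)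
    also have "\<dots> \<le> 2 * (cmod a)\<^sup>2 + 2 * (cmod b)\<^sup>2"
      using two_mult_le_weighted_squares[of 1 "cmod a" "cmod b"] unfolding power2_sum by simp
    finally show ?thesis .
  qed
  have "(\<lambda>v. 2 * (cmod (f v))\<^sup>2 + 2 * (cmod (g v))\<^sup>2) summable_on X"
    using assms unfolding l2_def by (intro summable_on_add summable_on_cmult_right) auto
  then have "(\<lambda>v. (cmod (f v + g v))\<^sup>2) summable_on X"
    by (rule summable_on_comparison_test) (simp_all add: sq)
  then show ?thesis
    using assms by (auto simp: l2_def)
qed

lemma l2_scale:
  assumes "f \<in> l2 X"
  shows "(\<lambda>v. c * f v) \<in> l2 X"
proof -
  have "(\<lambda>v. (cmod c)\<^sup>2 * (cmod (f v))\<^sup>2) summable_on X"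
    using assms unfolding l2_def by (intro summable_on_cmult_right) auto
  then show ?thesis
    using assms by (auto simp: l2_def norm_mult power_mult_distrib)
qed

lemma l2_diff:
  assumes "f \<in> l2 X" "g \<in> l2 X"
  shows "(\<lambda>v. f v - g v) \<in> l2 X"
  using l2_add[OF assms(1) l2_scale[OF assms(2), of "-1"]] by simp

lemma basis_vec_in_l2:
  assumes "v \<in> X"
  shows "basis_vec v \<in> l2 X"
proof -
  have "(\<lambda>w. (cmod (basis_vec v w))\<^sup>2) summable_on X \<longleftrightarrow>
        (\<lambda>w. (cmod (basis_vec v w))\<^sup>2) summable_on (X \<inter> {v})"
    by (rule summable_on_cong_neutral) (auto simp: basis_vec_def)
  then show ?thesis
    using assms by (auto simp: l2_def basis_vec_def)
qed

lemma l2_norm_summable_mult: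
  assumes "f \<in> l2 X" "g \<in> l2 X"
  shows "(\<lambda>v. norm (f v * cnj (g v))) summable_on X"
proof -
  have "(\<lambda>v. (1/2) * ((cmod (f v))\<^sup>2 + (cmod (g v))\<^sup>2)) summable_on X"
    using assms unfolding l2_def by (intro summable_on_cmult_right summable_on_add) auto
  moreover have "norm (f v * cnj (g v)) \<le> (1/2) * ((cmod (f v))\<^sup>2 + (cmod (g v))\<^sup>2)" for v
    using two_mult_le_weighted_squares[of 1 "cmod (f v)" "cmod (g v)"] by (simp add: norm_mult)
  ultimately show ?thesis
    by (rule summable_on_comparison_test) auto
qed

lemma l2_summable_mult:
  assumes "f \<in> l2 X" "g \<in> l2 X"
  shows "(\<lambda>v. f v * cnj (g v)) summable_on X"
  using abs_summable_summable[OF l2_norm_summable_mult[OF assms]] .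

lemma l2_inner_add_left:
  assumes "f \<in> l2 X" "g \<in> l2 X" "h \<in> l2 X"
  shows "l2_inner X (\<lambda>v. f v + g v) h = l2_inner X f h + l2_inner X g h"
  unfolding l2_inner_def distrib_right
  by (rule infsum_add) (use assms l2_summable_mult in auto)

lemma l2_inner_scale_left: "l2_inner X (\<lambda>v. c * f v) h = c * l2_inner X f h"
  unfolding l2_inner_def mult.assoc by (rule infsum_cmult_right')

lemma l2_inner_bound:
  assumes "f \<in> l2 X" "g \<in> l2 X" "t > 0"
  shows "2 * cmod (l2_inner X f g)
           \<le> t * (\<Sum>\<^sub>\<infinity>v\<in>X. (cmod (f v))\<^sup>2) + inverse t * (\<Sum>\<^sub>\<infinity>v\<in>X. (cmod (g v))\<^sup>2)"
proof -
  have sf: "(\<lambda>v. t * (cmod (f v))\<^sup>2) summable_on X"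
    and sg: "(\<lambda>v. inverse t * (cmod (g v))\<^sup>2) summable_on X"
    using assms unfolding l2_def by (auto intro: summable_on_cmult_right)
  have sn: "(\<lambda>v. norm (f v * cnj (g v))) summable_on X"
    using assms(1,2) by (rule l2_norm_summable_mult)
  have "2 * cmod (l2_inner X f g) \<le> 2 * (\<Sum>\<^sub>\<infinity>v\<in>X. norm (f v * cnj (g v)))"
    unfolding l2_inner_def using norm_infsum_bound[OF sn] by simp
  also have "\<dots> = (\<Sum>\<^sub>\<infinity>v\<in>X. 2 * norm (f v * cnj (g v)))"
    by (rule infsum_cmult_right'[symmetric])
  also have "\<dots> \<le> (\<Sum>\<^sub>\<infinity>v\<in>X. t * (cmod (f v))\<^sup>2 + inverse t * (cmod (g v))\<^sup>2)"
  proof (rule infsum_mono)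
    show "(\<lambda>v. 2 * norm (f v * cnj (g v))) summable_on X"
      using sn by (rule summable_on_cmult_right)
    show "(\<lambda>v. t * (cmod (f v))\<^sup>2 + inverse t * (cmod (g v))\<^sup>2) summable_on X"
      using sf sg by (rule summable_on_add)
    show "2 * norm (f v * cnj (g v)) \<le> t * (cmod (f v))\<^sup>2 + inverse t * (cmod (g v))\<^sup>2"
      for v
      using two_mult_le_weighted_squares[OF assms(3), of "cmod (f v)" "cmod (g v)"]
      by (simp add: norm_mult divide_inverse algebra_simps)
  qed
  also have "\<dots> = t * (\<Sum>\<^sub>\<infinity>v\<in>X. (cmod (f v))\<^sup>2) + inverse t * (\<Sum>\<^sub>\<infinity>v\<in>X. (cmod (g v))\<^sup>2)"
    by (simp add: infsum_add[OF sf sg] infsum_cmult_right')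
  finally show ?thesis .
qed

lemma l2_inner_le_dist_to_orthogonal:
  assumes f: "f \<in> l2 X" and g: "g \<in> l2 X" and k: "k \<in> l2 X"
    and "l2_inner X g k = 0" and dist: "l2_norm X (\<lambda>v. f v - g v) < e"
  shows "2 * cmod (l2_inner X f k) \<le> e * (1 + (\<Sum>\<^sub>\<infinity>v\<in>X. (cmod (k v))\<^sup>2))"
proof -
  define h where "h = (\<lambda>v. f v - g v)"
  define Nh where "Nh = (\<Sum>\<^sub>\<infinity>v\<in>X. (cmod (h v))\<^sup>2)"
  define Nk where "Nk = (\<Sum>\<^sub>\<infinity>v\<in>X. (cmod (k v))\<^sup>2)"
  have h: "h \<in> l2 X"
    unfolding h_def using f g by (rule l2_diff)
  have "l2_inner X f k = l2_inner X h k + l2_inner X g k"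
    using l2_inner_add_left[OF h g k] by (simp add: h_def)
  then have fk: "l2_inner X f k = l2_inner X h k"
    using \<open>l2_inner X g k = 0\<close> by simp
  have "Nh \<ge> 0"
    unfolding Nh_def by (rule infsum_nonneg) simp
  moreover have "sqrt Nh < e"
    using dist unfolding l2_norm_def Nh_def h_def .
  ultimately have "e > 0"
    using real_sqrt_ge_zero le_less_trans by blast
  then have "Nh < e\<^sup>2"
    using \<open>sqrt Nh < e\<close> \<open>Nh \<ge> 0\<close> by (metis real_sqrt_less_iff real_sqrt_abs abs_of_pos)
  have "2 * cmod (l2_inner X f k) \<le> inverse e * Nh + inverse (inverse e) * Nk"
    unfolding fk Nh_def Nk_def using h k by (rule l2_inner_bound) (use \<open>e > 0\<close> in simp)
  also have "\<dots> \<le> inverse e * e\<^sup>2 + e * Nk"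
    using \<open>Nh < e\<^sup>2\<close> \<open>e > 0\<close> by (simp add: mult_left_mono)
  also have "\<dots> = e * (1 + Nk)"
    using \<open>e > 0\<close> by (simp add: power2_eq_square field_simps)
  finally show ?thesis
    unfolding Nk_def .
qed

lemma l2_inner_eq_0_closure:
  assumes f: "f \<in> l2_closure X A" and k: "k \<in> l2 X"
    and A: "\<And>g. g \<in> A \<Longrightarrow> g \<in> l2 X \<and> l2_inner X g k = 0"
  shows "l2_inner X f k = 0"
proof -
  define Nk where "Nk = (\<Sum>\<^sub>\<infinity>v\<in>X. (cmod (k v))\<^sup>2)"
  have "Nk \<ge> 0"
    unfolding Nk_def by (rule infsum_nonneg) simp
  have "cmod (l2_inner X f k) \<le> 0 + e" if "e > 0" for e
  proof -
    have "e / (1 + Nk) > 0"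
      using \<open>e > 0\<close> \<open>Nk \<ge> 0\<close> by simp
    then obtain g where "g \<in> A" and "l2_norm X (\<lambda>v. f v - g v) < e / (1 + Nk)"
      using f unfolding l2_closure_def by blast
    then have "2 * cmod (l2_inner X f k) \<le> e / (1 + Nk) * (1 + Nk)"
      using f k A unfolding Nk_def l2_closure_def by (intro l2_inner_le_dist_to_orthogonal) auto
    then show ?thesis
      using \<open>Nk \<ge> 0\<close> \<open>e > 0\<close> by simp
  qed
  then show ?thesis
    using field_le_epsilon[of "cmod (l2_inner X f k)" 0] by simp
qed

lemma cspan_subset_ker_adj:
  assumes T: "\<And>y. y \<in> l2 X \<Longrightarrow> T y \<in> l2 X" and A: "A \<subseteq> ker_adj X T"
  shows "cspan A \<subseteq> ker_adj X T"
proof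
  fix f assume "f \<in> cspan A"
  then obtain S c where "finite S" "S \<subseteq> A" and f: "f = (\<lambda>v. \<Sum>a\<in>S. c a * a v)"
    unfolding cspan_def by blast
  from \<open>finite S\<close> \<open>S \<subseteq> A\<close> show "f \<in> ker_adj X T"
    unfolding f
  proof (induction S rule: finite_induct)
    case empty
    then show ?case
      by (simp add: ker_adj_def l2_zero l2_inner_def)
  next
    case (insert a S)
    have a: "a \<in> l2 X" "\<And>y. y \<in> l2 X \<Longrightarrow> l2_inner X a (T y) = 0"
      using insert.prems A by (auto simp: ker_adj_def)
    have S: "(\<lambda>v. \<Sum>b\<in>S. c b * b v) \<in> l2 X"
      "\<And>y. y \<in> l2 X \<Longrightarrow> l2_inner X (\<lambda>v. \<Sum>b\<in>S. c b * b v) (T y) = 0"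
      using insert by (auto simp: ker_adj_def)
    show ?case
      using insert(1,2) a S T l2_add[OF l2_scale[OF a(1)] S(1)]
      by (simp add: ker_adj_def l2_inner_add_left[OF l2_scale[OF a(1)] S(1)] l2_inner_scale_left)
  qed
qed

lemma closed_span_subset_ker_adj:
  assumes T: "\<And>y. y \<in> l2 X \<Longrightarrow> T y \<in> l2 X" and A: "A \<subseteq> ker_adj X T"
  shows "closed_span X A \<subseteq> ker_adj X T"
proof
  fix f assume f: "f \<in> closed_span X A"
  have "l2_inner X f (T y) = 0" if "y \<in> l2 X" for y
    using f unfolding closed_span_def
    by (rule l2_inner_eq_0_closure)
       (use cspan_subset_ker_adj[OF T A] that T in \<open>auto simp: ker_adj_def\<close>)
  then show "f \<in> ker_adj X T"
    using f unfolding ker_adj_def closed_span_def l2_closure_def by auto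
qed

lemma closed_span_subset_Inter_ker_adj:
  assumes "\<And>j y. j \<in> J \<Longrightarrow> y \<in> l2 X \<Longrightarrow> T j y \<in> l2 X"
    and "A \<subseteq> (\<Inter>j\<in>J. ker_adj X (T j))"
  shows "closed_span X A \<subseteq> (\<Inter>j\<in>J. ker_adj X (T j))"
  using assms closed_span_subset_ker_adj[of X "T j" A for j] by blast

lemma truncation_in_cspan_basis_vec:
  assumes "finite S" "S \<subseteq> P"
  shows "(\<lambda>v. if v \<in> S then x v else 0) \<in> cspan {basis_vec v | v. v \<in> P}"
proof -
  have inj: "inj_on basis_vec S"
    by (rule inj_onI) (metis basis_vec_def zero_neq_one)
  define c where "c = (\<lambda>a. x (inv_into S basis_vec a))"
  have "(\<Sum>a\<in>basis_vec ` S. c a * a v) = (if v \<in> S then x v else 0)" for v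
  proof -
    have "(\<Sum>a\<in>basis_vec ` S. c a * a v) = (\<Sum>u\<in>S. c (basis_vec u) * basis_vec u v)"
      by (simp add: sum.reindex[OF inj])
    also have "\<dots> = (\<Sum>u\<in>S. if u = v then x u else 0)"
    proof (rule sum.cong)
      fix u assume "u \<in> S"
      then have "c (basis_vec u) = x u"
        by (simp add: c_def inv_into_f_f[OF inj])
      then show "c (basis_vec u) * basis_vec u v = (if u = v then x u else 0)"
        by (simp add: basis_vec_def)
    qed simp
    finally show ?thesis
      using assms(1) by simp
  qed
  then show ?thesis
    unfolding cspan_def using assms by (intro CollectI exI[of _ "basis_vec ` S"] exI[of _ c]) auto
qed

lemma l2_in_closed_span_basis_vec:
  assumes x: "x \<in> l2 X" and supp: "\<And>w. w \<notin> P \<Longrightarrow> x w = 0"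
  shows "x \<in> closed_span X {basis_vec v | v. v \<in> P}"
  unfolding closed_span_def l2_closure_def
proof (intro CollectI conjI allI impI x)
  fix e :: real assume e: "e > 0"
  define h where "h = (\<lambda>v. (cmod (x v))\<^sup>2)"
  have hs: "h summable_on X"
    using x unfolding l2_def h_def by auto
  obtain S where S: "finite S" "S \<subseteq> X" and dS: "dist (sum h S) (infsum h X) \<le> e\<^sup>2 / 2"
    using infsum_finite_approximation[OF hs, of "e\<^sup>2 / 2"] e by auto
  define g where "g = (\<lambda>v. if v \<in> S \<inter> P then x v else 0)"
  have "(\<Sum>\<^sub>\<infinity>v\<in>X. (cmod (x v - g v))\<^sup>2) = infsum h (X - S)"
    by (rule infsum_cong_neutral) (auto simp: g_def h_def supp)
  also have "\<dots> = infsum h X - sum h S"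
    using infsum_Diff[OF hs _ S(2)] S by simp
  also have "\<dots> < e\<^sup>2"
    using dS \<open>e > 0\<close> zero_less_power[of e 2] unfolding dist_real_def by linarith
  finally have "l2_norm X (\<lambda>v. x v - g v) < e"
    unfolding l2_norm_def using e by (simp add: real_sqrt_less_iff real_less_lsqrt)
  moreover have "g \<in> cspan {basis_vec v | v. v \<in> P}"
    unfolding g_def using S(1) by (intro truncation_in_cspan_basis_vec) auto
  ultimately show "\<exists>g\<in>cspan {basis_vec v | v. v \<in> P}. l2_norm X (\<lambda>v. x v - g v) < e"
    by blast
qed

lemma rooted_tree_root:
  assumes "rooted_directed_tree V E"
  shows "tree_root V E \<in> V" "(u, tree_root V E) \<notin> E"
proof -
  have "\<exists>!r. r \<in> V \<and> (\<nexists>u. (u, r) \<in> E)"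
    using assms unfolding rooted_directed_tree_def by blast
  then have "tree_root V E \<in> V \<and> (\<nexists>u. (u, tree_root V E) \<in> E)"
    unfolding tree_root_def by (rule theI')
  then show "tree_root V E \<in> V" "(u, tree_root V E) \<notin> E"
    by auto
qed

lemma rooted_tree_has_parent:
  assumes "rooted_directed_tree V E" "v \<in> V" "v \<noteq> tree_root V E"
  obtains u where "(u, v) \<in> E"
proof -
  have "\<exists>!r. r \<in> V \<and> (\<nexists>u. (u, r) \<in> E)"
    using assms unfolding rooted_directed_tree_def by blast
  then show ?thesis
    using that rooted_tree_root[OF assms(1)] assms(2,3) by blast
qed

lemma rooted_tree_edge_in_V:
  assumes "rooted_directed_tree V E" "(u, v) \<in> E"
  shows "u \<in> V" "v \<in> V"
  using assms unfolding rooted_directed_tree_def directed_tree_def by auto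

lemma rooted_tree_parent_eq:
  assumes "rooted_directed_tree V E" "(u, v) \<in> E"
  shows "parent E v = u"
proof -
  have "\<exists>!u. (u, v) \<in> E"
    using assms rooted_tree_edge_in_V[OF assms]
    unfolding rooted_directed_tree_def directed_tree_def by blast
  then show ?thesis
    unfolding parent_def using assms(2) by (rule the1_equality)
qed

lemma children_eq_singleton_if_not_branching:
  assumes "p \<in> V" "p \<notin> branching V E" "(p, c) \<in> E"
  shows "children E p = {c}"
proof -
  have "finite (children E p)" "card (children E p) \<le> Suc 0"
    using assms(1,2) unfolding branching_def by auto
  moreover have "c \<in> children E p"
    using assms(3) unfolding children_def by simp
  ultimately show ?thesis
    using card_le_Suc0_iff_eq by blast
qed

lemma l2_inner_scaled_basis_vec:
  assumes "w \<in> X"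
  shows "l2_inner X x (\<lambda>u. c * basis_vec w u) = x w * cnj c"
proof -
  have "l2_inner X x (\<lambda>u. c * basis_vec w u)
      = (\<Sum>\<^sub>\<infinity>u\<in>{w}. x u * cnj (c * basis_vec w u))"
    unfolding l2_inner_def
    by (rule infsum_cong_neutral) (use assms in \<open>auto simp: basis_vec_def\<close>)
  then show ?thesis
    by (simp add: basis_vec_def)
qed

lemma in_ker_adj_mshift_if_vanishes_off_root:
  assumes "f \<in> l2 X" "\<And>w. w i \<noteq> tree_root (V i) (E i) \<Longrightarrow> f w = 0"
  shows "f \<in> ker_adj X (mshift d V E lam i)"
proof -
  have "(\<lambda>w. f w * cnj (mshift d V E lam i y w)) = (\<lambda>w. 0)" for y
    using assms(2) by (intro ext) (simp add: mshift_def)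
  then show ?thesis
    using assms(1) by (simp add: ker_adj_def l2_inner_def)
qed

lemma l2_inner_mshift_children_j:
  assumes tree: "rooted_directed_tree (V j) (E j)"
    and supp: "\<And>w. w \<notin> children_j d V E j v \<Longrightarrow> f w = 0"
  shows "l2_inner X f (mshift d V E lam j y)
       = cnj (y v) * l2_inner X f
           (\<lambda>u. if u \<in> children_j d V E j v then complex_of_real (lam j u) else 0)"
proof -
  define \<Gamma> where "\<Gamma> = (\<lambda>u. if u \<in> children_j d V E j v then complex_of_real (lam j u) else 0)"
  have "f w * cnj (mshift d V E lam j y w) = cnj (y v) * (f w * cnj (\<Gamma> w))" for w
  proof (cases "w \<in> children_j d V E j v")
    case True
    then have "w \<in> prod_vertices d V" and edge: "(v j, w j) \<in> E j" and "w(j := v j) = v"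
      unfolding children_j_def children_def by (auto intro!: ext)
    moreover have "w j \<noteq> tree_root (V j) (E j)"
      using edge rooted_tree_root(2)[OF tree] by metis
    ultimately have "mshift d V E lam j y w = complex_of_real (lam j w) * y v"
      by (simp add: mshift_def rooted_tree_parent_eq[OF tree edge])
    then show ?thesis
      using True by (simp add: \<Gamma>_def)
  next
    case False
    then show ?thesis
      using supp by simp
  qed
  then have "(\<lambda>w. f w * cnj (mshift d V E lam j y w)) = (\<lambda>w. cnj (y v) * (f w * cnj (\<Gamma> w)))"
    by (rule ext)
  then show ?thesis
    unfolding l2_inner_def \<Gamma>_def[symmetric] by (simp only: infsum_cmult_right')
qed

lemma mshift_basis_vec_only_child:
  assumes tree: "rooted_directed_tree (V j) (E j)" and "j < d"
    and w: "w \<in> prod_vertices d V" and edge: "(p, w j) \<in> E j"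
    and only_child: "children (E j) p = {w j}"
  shows "mshift d V E lam j (basis_vec (w(j := p)))
       = (\<lambda>u. complex_of_real (lam j w) * basis_vec w u)"
proof
  fix u
  have "u = w"
    if u: "u \<in> prod_vertices d V" "u j \<noteq> tree_root (V j) (E j)"
      and eq: "u(j := parent (E j) (u j)) = w(j := p)"
  proof -
    have "u j \<in> V j"
      using u(1) \<open>j < d\<close> unfolding prod_vertices_def by auto
    then obtain q where q: "(q, u j) \<in> E j"
      using rooted_tree_has_parent[OF tree _ u(2)] by blast
    have "parent (E j) (u j) = p"
      using fun_cong[OF eq, of j] by simp
    then have "u j \<in> children (E j) p"
      using q rooted_tree_parent_eq[OF tree q] unfolding children_def by simp
    then have "u j = w j"
      using only_child by simp
    show "u = w"
    proof
      fix k
      show "u k = w k"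
        using \<open>u j = w j\<close> fun_cong[OF eq, of k] by (cases "k = j") simp_all
    qed
  qed
  moreover have "w j \<noteq> tree_root (V j) (E j)"
    using edge rooted_tree_root(2)[OF tree] by metis
  moreover have "w(j := parent (E j) (w j)) = w(j := p)"
    by (simp add: rooted_tree_parent_eq[OF tree edge])
  ultimately show "mshift d V E lam j (basis_vec (w(j := p))) u
      = complex_of_real (lam j w) * basis_vec w u"
    using w unfolding mshift_def basis_vec_def by (cases "u = w") auto
qed

lemma ker_adj_mshift_vanishes_at_only_child:
  assumes tree: "rooted_directed_tree (V j) (E j)" and "j < d"
    and w: "w \<in> prod_vertices d V" and edge: "(p, w j) \<in> E j"
    and not_branching: "p \<notin> branching (V j) (E j)" and "lam j w \<noteq> 0"
    and x: "x \<in> ker_adj (prod_vertices d V) (mshift d V E lam j)"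
  shows "x w = 0"
proof -
  have "p \<in> V j"
    using rooted_tree_edge_in_V(1)[OF tree edge] .
  then have only_child: "children (E j) p = {w j}"
    using not_branching edge by (rule children_eq_singleton_if_not_branching)
  have "w(j := p) \<in> PiE (insert j {..<d}) V"
    using \<open>p \<in> V j\<close> w unfolding prod_vertices_def by (rule PiE_fun_upd)
  then have "w(j := p) \<in> prod_vertices d V"
    using \<open>j < d\<close> by (simp add: prod_vertices_def insert_absorb)
  then have "l2_inner (prod_vertices d V) x (mshift d V E lam j (basis_vec (w(j := p)))) = 0"
    using x basis_vec_in_l2[of "w(j := p)"] unfolding ker_adj_def by blast
  moreover have "mshift d V E lam j (basis_vec (w(j := p)))
      = (\<lambda>u. complex_of_real (lam j w) * basis_vec w u)"
    using tree \<open>j < d\<close> w edge only_child by (rule mshift_basis_vec_only_child)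
  ultimately have "x w * cnj (complex_of_real (lam j w)) = 0"
    using l2_inner_scaled_basis_vec[OF w, of x] by simp
  then show ?thesis
    using \<open>lam j w \<noteq> 0\<close> by simp
qed

lemma ortho_diff_children_j_subset_ker_adj:
  assumes tree: "rooted_directed_tree (V j) (E j)"
    and v: "\<And>i. i \<noteq> j \<Longrightarrow> i < d \<Longrightarrow> v i = tree_root (V i) (E i)" and "i < d"
  shows "ortho_diff X (l2_sub X (children_j d V E j v))
           (line_span (\<lambda>u. if u \<in> children_j d V E j v then complex_of_real (lam j u) else 0))
         \<subseteq> ker_adj X (mshift d V E lam i)"
proof
  fix f
  define \<Gamma> where "\<Gamma> = (\<lambda>u. if u \<in> children_j d V E j v then complex_of_real (lam j u) else 0)"
  assume "f \<in> ortho_diff X (l2_sub X (children_j d V E j v)) (line_span \<Gamma>)"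
  moreover have "\<Gamma> \<in> line_span \<Gamma>"
    unfolding line_span_def by (auto intro: exI[of _ 1])
  ultimately have f: "f \<in> l2 X" and supp: "\<And>w. w \<notin> children_j d V E j v \<Longrightarrow> f w = 0"
    and "l2_inner X f \<Gamma> = 0"
    unfolding ortho_diff_def l2_sub_def by auto
  show "f \<in> ker_adj X (mshift d V E lam i)"
  proof (cases "i = j")
    case True
    have "l2_inner X f (mshift d V E lam j y) = cnj (y v) * l2_inner X f \<Gamma>" for y
      unfolding \<Gamma>_def using tree supp by (rule l2_inner_mshift_children_j)
    then show ?thesis
      using f True \<open>l2_inner X f \<Gamma> = 0\<close> by (simp add: ker_adj_def)
  next
    case False
    have "w \<notin> children_j d V E j v" if "w i \<noteq> tree_root (V i) (E i)" for w
      using v[OF False \<open>i < d\<close>] that False unfolding children_j_def by auto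
    then have off_root: "f w = 0" if "w i \<noteq> tree_root (V i) (E i)" for w
      using that supp by blast
    show ?thesis
      using f off_root by (rule in_ker_adj_mshift_if_vanishes_off_root)
  qed
qed

lemma line_span_prod_root_subset_ker_adj:
  assumes "\<And>j. j < d \<Longrightarrow> rooted_directed_tree (V j) (E j)" "i < d"
  shows "line_span (basis_vec (prod_root d V E))
         \<subseteq> ker_adj (prod_vertices d V) (mshift d V E lam i)"
proof
  fix f assume "f \<in> line_span (basis_vec (prod_root d V E))"
  then obtain c where f: "f = (\<lambda>w. c * basis_vec (prod_root d V E) w)"
    unfolding line_span_def by blast
  have "prod_root d V E \<in> prod_vertices d V"
    using assms(1) rooted_tree_root(1) by (auto simp: prod_root_def prod_vertices_def)
  then have "f \<in> l2 (prod_vertices d V)"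
    unfolding f by (intro l2_scale basis_vec_in_l2)
  moreover have "f w = 0" if "w i \<noteq> tree_root (V i) (E i)" for w
    using that assms(2) by (auto simp: f basis_vec_def prod_root_def)
  ultimately show "f \<in> ker_adj (prod_vertices d V) (mshift d V E lam i)"
    by (rule in_ker_adj_mshift_if_vanishes_off_root)
qed

lemma joint_ker_adj_vanishes_off_branch_children:
  assumes trees: "\<And>j. j < d \<Longrightarrow> rooted_directed_tree (V j) (E j)"
    and weights_pos: "\<And>j w. j < d \<Longrightarrow> w \<in> prod_vertices d V \<Longrightarrow>
                        w j \<noteq> tree_root (V j) (E j) \<Longrightarrow> lam j w > 0"
    and x: "x \<in> (\<Inter>j\<in>{..<d}. ker_adj (prod_vertices d V) (mshift d V E lam j))"
    and w: "w \<in> prod_vertices d V"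
    and not_in_F: "w \<notin> PiE {..<d} (\<lambda>j. children_set (E j) (branching (V j) (E j))
                                          \<union> {tree_root (V j) (E j)})"
  shows "x w = 0"
proof -
  obtain j where "j < d" and "w j \<notin> children_set (E j) (branching (V j) (E j))"
    and nonroot: "w j \<noteq> tree_root (V j) (E j)"
    using w not_in_F unfolding prod_vertices_def by (auto simp: PiE_iff)
  moreover have "w j \<in> V j"
    using w \<open>j < d\<close> unfolding prod_vertices_def by auto
  then obtain p where edge: "(p, w j) \<in> E j"
    using rooted_tree_has_parent[OF trees[OF \<open>j < d\<close>] _ nonroot] by blast
  ultimately have "p \<notin> branching (V j) (E j)"
    unfolding children_set_def children_def by auto
  moreover have "lam j w \<noteq> 0"
    using weights_pos[OF \<open>j < d\<close> w nonroot] by simp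
  moreover have "x \<in> ker_adj (prod_vertices d V) (mshift d V E lam j)"
    using x \<open>j < d\<close> by blast
  ultimately show ?thesis
    using trees[OF \<open>j < d\<close>] \<open>j < d\<close> w edge
    by (intro ker_adj_mshift_vanishes_at_only_child[where V = V and E = E and p = p]) auto
qed

lemma joint_ker_adj_subset_closed_span_branch_children:
  assumes "d \<ge> 1"
    and trees: "\<And>j. j < d \<Longrightarrow> rooted_directed_tree (V j) (E j)"
    and weights_pos: "\<And>j w. j < d \<Longrightarrow> w \<in> prod_vertices d V \<Longrightarrow>
                        w j \<noteq> tree_root (V j) (E j) \<Longrightarrow> lam j w > 0"
  shows "(\<Inter>j\<in>{..<d}. ker_adj (prod_vertices d V) (mshift d V E lam j))
         \<subseteq> closed_span (prod_vertices d V)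
             {basis_vec v | v. v \<in> PiE {..<d} (\<lambda>j. children_set (E j) (branching (V j) (E j))
                                                    \<union> {tree_root (V j) (E j)})}"
proof
  fix x assume x: "x \<in> (\<Inter>j\<in>{..<d}. ker_adj (prod_vertices d V) (mshift d V E lam j))"
  then have "x \<in> ker_adj (prod_vertices d V) (mshift d V E lam 0)"
    using \<open>d \<ge> 1\<close> by auto
  then have "x \<in> l2 (prod_vertices d V)"
    by (simp add: ker_adj_def)
  moreover have "x w = 0"
    if "w \<notin> PiE {..<d} (\<lambda>j. children_set (E j) (branching (V j) (E j))
                                   \<union> {tree_root (V j) (E j)})" for w
  proof (cases "w \<in> prod_vertices d V")
    case True
    show ?thesis
      using trees weights_pos x True that by (rule joint_ker_adj_vanishes_off_branch_children)
  next
    case False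
    then show ?thesis
      using \<open>x \<in> l2 (prod_vertices d V)\<close> by (simp add: l2_def)
  qed
  ultimately show "x \<in> closed_span (prod_vertices d V)
      {basis_vec v | v. v \<in> PiE {..<d} (\<lambda>j. children_set (E j) (branching (V j) (E j))
                                             \<union> {tree_root (V j) (E j)})}"
    by (rule l2_in_closed_span_basis_vec)
qed

theorem mainTheorem15:
  fixes d :: nat
    and V :: "nat \<Rightarrow> 'a set"
    and E :: "nat \<Rightarrow> ('a \<times> 'a) set"
    and lam :: "nat \<Rightarrow> (nat \<Rightarrow> 'a) \<Rightarrow> real"
  assumes d_pos: "d \<ge> 1"
    and trees: "\<forall>j<d. rooted_directed_tree (V j) (E j) \<and> leafless (V j) (E j) \<and> countable (V j)"
    and weights_pos: "\<forall>j<d. \<forall>w\<in>prod_vertices d V. w j \<noteq> tree_root (V j) (E j) \<longrightarrow> lam j w > 0"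
    and bounded: "\<forall>j<d. bounded_on_l2 (prod_vertices d V) (mshift d V E lam j)"
    and commuting: "\<forall>i<d. \<forall>j<d. \<forall>f\<in>l2 (prod_vertices d V).
        mshift d V E lam i (mshift d V E lam j f) = mshift d V E lam j (mshift d V E lam i f)"
  shows
   "let X = prod_vertices d V;
        rt = prod_root d V E;
        Ek = (\<Inter>j\<in>{..<d}. ker_adj X (mshift d V E lam j));
        D = (\<lambda>j. {v \<in> X. v j \<in> branching (V j) (E j) \<and>
                          (\<forall>i<d. i \<noteq> j \<longrightarrow> v i = tree_root (V i) (E i))});
        Gamma = (\<lambda>j v u. if u \<in> children_j d V E j v then complex_of_real (lam j u) else 0);
        F = (\<lambda>j. children_set (E j) (branching (V j) (E j)) \<union> {tree_root (V j) (E j)});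
        LHS = oplus2 X
                (closed_span X (\<Union>j\<in>{..<d}.
                   osum X (D j) (\<lambda>v. ortho_diff X (l2_sub X (children_j d V E j v))
                                                  (line_span (Gamma j v)))))
                (line_span (basis_vec rt));
        RHS = closed_span X {basis_vec v | v. v \<in> PiE {..<d} F}
    in LHS \<subseteq> Ek \<and> Ek \<subseteq> RHS"
proof -
  define X where "X = prod_vertices d V"
  define Ek where "Ek = (\<Inter>j\<in>{..<d}. ker_adj X (mshift d V E lam j))"
  define F where "F = (\<lambda>j. children_set (E j) (branching (V j) (E j)) \<union> {tree_root (V j) (E j)})"
  have tree: "\<And>j. j < d \<Longrightarrow> rooted_directed_tree (V j) (E j)"
    using trees by blast
  have closed: "closed_span X A \<subseteq> Ek" if "A \<subseteq> Ek" for A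
    using bounded that unfolding Ek_def X_def bounded_on_l2_def
    by (intro closed_span_subset_Inter_ker_adj) auto
  have first_kind: "ortho_diff X (l2_sub X (children_j d V E j v))
      (line_span (\<lambda>u. if u \<in> children_j d V E j v then complex_of_real (lam j u) else 0)) \<subseteq> Ek"
    if "j < d" "\<forall>i<d. i \<noteq> j \<longrightarrow> v i = tree_root (V i) (E i)" for j v
    unfolding Ek_def using that tree
    by (intro INT_greatest ortho_diff_children_j_subset_ker_adj[where V = V and E = E]) auto
  have root: "line_span (basis_vec (prod_root d V E)) \<subseteq> Ek"
    unfolding Ek_def X_def using tree
    by (intro INT_greatest line_span_prod_root_subset_ker_adj[where V = V and E = E]) auto
  have upper: "Ek \<subseteq> closed_span X {basis_vec v | v. v \<in> PiE {..<d} F}"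
    unfolding Ek_def X_def F_def using d_pos tree weights_pos
    by (intro joint_ker_adj_subset_closed_span_branch_children) auto
  show ?thesis
    unfolding Let_def oplus2_def osum_def X_def[symmetric] F_def[symmetric] Ek_def[symmetric]
    by (intro conjI closed Un_least UN_least root upper) (auto dest: first_kind)
qed

end
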